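(* In the strategic matching-queue model of the context, under the ACR policy it is a dominant strategy for a specialized agent of type $i\in\mathcal{L}\setminus\{0\}$ to join queue $i$; i.e. in equilibrium $\sigma^{\mathrm{ACR}}_{ii}=1$ for all $i\in\mathcal{L}\setminus\{0\}$.
   Context: Types $\mathcal{L}=\{0,\dots,\ell\}$; agents of type $i$ arrive Poisson at rate $\lambda_i>0$, jobs of type $j$ Poisson at rate $\mu_j>0$, independently; type $0$ agents can fulfill all jobs, type $i\ge1$ (specialized) agents only type $i$ jobs; unmatched jobs are lost; waiting agents abandon at exponential rate $\theta>0$. Agent types are private. The ACR policy offers queues $\{0,1,\dots,\ell\}$; a type $0$ job is offered only to queue $0$, a type $j\ge1$ job first to queue $j$ and then to queue $0$; within a queue the job is offered to uniformly random agents (without replacement), each accepting iff compatible (rejection takes no time). Each arriving type $i$ agent joins queue $q$ with probability $\sigma_{iq}$ and never switches; agents choose queues to minimize expected steady-state waiting time until match. Joining queue $i$ being a dominant strategy means that for every profile of the other agents, the expected waiting time of a type $i$ agent in queue $i$ is no larger than in any other queue. *)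

theory Defs
  imports "HOL-Probability.Probability"
begin

text \<open>
  Types and queues are 0..l.  A (system) state records, for every queue r and
  agent type k, the number  n r k  of waiting agents of type k in queue r.
  The lambda/mu/theta parameters and the profile sigma (sigma k r = probability
  that an arriving type k agent joins queue r) determine a continuous-time
  Markov chain.  A tagged agent of type i in queue q is modelled by an extra
  agent added to the population; its expected sojourn time (time until it is
  matched or abandons) is the minimal nonnegative solution of the standard
  expected-hitting-time equations (least fixed point in ennreal).
\<close>

type_synonym state = "nat \<Rightarrow> nat \<Rightarrow> nat"

definition incr :: "state \<Rightarrow> nat \<Rightarrow> nat \<Rightarrow> state" where
  "incr n r k = n(r := (n r)(k := n r k + 1))"

definition decr :: "state \<Rightarrow> nat \<Rightarrow> nat \<Rightarrow> state" where
  "decr n r k = n(r := (n r)(k := n r k - 1))"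

definition valid_state :: "nat \<Rightarrow> state \<Rightarrow> bool" where
  "valid_state l n \<longleftrightarrow> (\<forall>r k. (l < r \<or> l < k) \<longrightarrow> n r k = 0)"

text \<open>agent type k can fulfil job type j\<close>
definition compat :: "nat \<Rightarrow> nat \<Rightarrow> bool" where
  "compat k j \<longleftrightarrow> k = 0 \<or> k = j"

definition compat_count :: "nat \<Rightarrow> state \<Rightarrow> nat \<Rightarrow> nat \<Rightarrow> nat" where
  "compat_count l m r j = (\<Sum>k\<le>l. if compat k j then m r k else 0)"

text \<open>ACR routing: the queue in which a type j job is matched (if any)\<close>
definition route :: "nat \<Rightarrow> state \<Rightarrow> nat \<Rightarrow> nat option" where
  "route l m j =
     (if j = 0 then (if 0 < compat_count l m 0 0 then Some 0 else None)
      else if 0 < compat_count l m j j then Some j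
      else if 0 < compat_count l m 0 j then Some 0
      else None)"

text \<open>population including the (optional) tagged agent (queue q, type i)\<close>
definition with_tagged :: "state \<Rightarrow> (nat \<times> nat) option \<Rightarrow> state" where
  "with_tagged n t = (case t of None \<Rightarrow> n | Some (q, i) \<Rightarrow> incr n q i)"

text \<open>transition rate from n to n' of the non-tagged agents, given the optional tagged agent t.
  Within the matching queue the job is accepted by a uniformly random compatible agent.\<close>
definition rate :: "nat \<Rightarrow> (nat \<Rightarrow> real) \<Rightarrow> (nat \<Rightarrow> real) \<Rightarrow> real \<Rightarrow> (nat \<Rightarrow> nat \<Rightarrow> real)
                    \<Rightarrow> (nat \<times> nat) option \<Rightarrow> state \<Rightarrow> state \<Rightarrow> real" where
  "rate l lam mu \<theta> \<sigma> t n n' =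
     (\<Sum>k\<le>l. \<Sum>r\<le>l. if n' = incr n r k then lam k * \<sigma> k r else 0)
   + (\<Sum>r\<le>l. \<Sum>k\<le>l. if 0 < n r k \<and> n' = decr n r k then \<theta> * real (n r k) else 0)
   + (\<Sum>j\<le>l. case route l (with_tagged n t) j of
          None \<Rightarrow> 0
        | Some r \<Rightarrow> (\<Sum>k\<le>l. if compat k j \<and> 0 < n r k \<and> n' = decr n r k
                         then mu j * real (n r k) / real (compat_count l (with_tagged n t) r j)
                         else 0))"

text \<open>rate at which a tagged agent of type i in queue q leaves (abandonment or match)\<close>
definition exit_rate :: "nat \<Rightarrow> (nat \<Rightarrow> real) \<Rightarrow> real \<Rightarrow> nat \<Rightarrow> nat \<Rightarrow> state \<Rightarrow> real" where
  "exit_rate l mu \<theta> i q n =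
     \<theta> + (\<Sum>j\<le>l. if route l (incr n q i) j = Some q \<and> compat i j
                 then mu j / real (compat_count l (incr n q i) q j) else 0)"

text \<open>expected remaining sojourn time of a tagged type i agent in queue q when the other
  agents are in state n: minimal nonnegative solution of
  h n = (1 + sum_n' Q(n,n') h n') / (exit rate + sum_n' Q(n,n')).\<close>
definition sojourn :: "nat \<Rightarrow> (nat \<Rightarrow> real) \<Rightarrow> (nat \<Rightarrow> real) \<Rightarrow> real \<Rightarrow> (nat \<Rightarrow> nat \<Rightarrow> real)
                       \<Rightarrow> nat \<Rightarrow> nat \<Rightarrow> state \<Rightarrow> ennreal" where
  "sojourn l lam mu \<theta> \<sigma> i q =
     lfp (\<lambda>h n. (1 + (\<Sum>\<^sub>\<infinity>n'. ennreal (rate l lam mu \<theta> \<sigma> (Some (q, i)) n n') * h n'))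
              / (ennreal (exit_rate l mu \<theta> i q n)
                 + (\<Sum>\<^sub>\<infinity>n'. ennreal (rate l lam mu \<theta> \<sigma> (Some (q, i)) n n'))))"

definition stationary :: "nat \<Rightarrow> (nat \<Rightarrow> real) \<Rightarrow> (nat \<Rightarrow> real) \<Rightarrow> real \<Rightarrow> (nat \<Rightarrow> nat \<Rightarrow> real)
                          \<Rightarrow> state pmf \<Rightarrow> bool" where
  "stationary l lam mu \<theta> \<sigma> \<pi> \<longleftrightarrow>
     set_pmf \<pi> \<subseteq> {n. valid_state l n} \<and>
     (\<forall>n. ennreal (pmf \<pi> n) * (\<Sum>\<^sub>\<infinity>n'. ennreal (rate l lam mu \<theta> \<sigma> None n n'))
          = (\<Sum>\<^sub>\<infinity>n'. ennreal (pmf \<pi> n') * ennreal (rate l lam mu \<theta> \<sigma> None n' n)))"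

text \<open>expected steady-state waiting time of a type i agent joining queue q
  (arrivals see the stationary distribution)\<close>
definition expected_wait :: "nat \<Rightarrow> (nat \<Rightarrow> real) \<Rightarrow> (nat \<Rightarrow> real) \<Rightarrow> real \<Rightarrow> (nat \<Rightarrow> nat \<Rightarrow> real)
                             \<Rightarrow> state pmf \<Rightarrow> nat \<Rightarrow> nat \<Rightarrow> ennreal" where
  "expected_wait l lam mu \<theta> \<sigma> \<pi> i q =
     (\<Sum>\<^sub>\<infinity>n. ennreal (pmf \<pi> n) * sojourn l lam mu \<theta> \<sigma> i q n)"

definition profile :: "nat \<Rightarrow> (nat \<Rightarrow> nat \<Rightarrow> real) \<Rightarrow> bool" where
  "profile l \<sigma> \<longleftrightarrow> (\<forall>k\<le>l. \<forall>r\<le>l. 0 \<le> \<sigma> k r) \<and> (\<forall>k\<le>l. (\<Sum>r\<le>l. \<sigma> k r) = 1)"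

end

theory Submission
  imports Defs
begin

(* Let c be the number of agents other than a tagged type-i agent that wait in queue i and can
   serve type-i jobs. Under ACR, the system seen through c moves like a birth-death chain,
   wherever the tagged agent waits. Benchmark: an agent of lowest priority in queue i, served
   (at rate mu_i) only when c = 0; let g(c) be its expected sojourn. An agent in queue i is
   served in uniformly random order, so g is a supersolution of its sojourn equations; an agent
   in another queue can only be served from queue 0 when c = 0, at rate at most mu_i, so g is a
   subsolution of its equations. The sojourn time is the minimal solution, hence at most g(c) in
   queue i; it is at least the bounded subsolution g(c) in any other queue because jump rates
   grow at most linearly in the population while abandonment kills the chain at rate theta.
   Both comparisons hold in every state, hence also on average. *)

section \<open>Killed Markov chains\<close>

text \<open>Bound on the probability that a killed chain started with population \<open>s\<close> makes \<open>k\<close> jumps: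
  a jump precedes killing with probability \<open>R / (e + R) \<le> (A + \<theta> s) / (A + \<theta> (s + 1))\<close> when
  \<open>R \<le> A + \<theta> s\<close> and \<open>\<theta> \<le> e\<close>, and the population grows by at most one per jump, so the
  product telescopes.\<close>
definition survival_bound :: "real \<Rightarrow> real \<Rightarrow> nat \<Rightarrow> nat \<Rightarrow> real" where
  "survival_bound A \<theta> k s = (A + \<theta> * real s) / (A + \<theta> * (real s + real k))"

context
  fixes A \<theta> :: real
  assumes A_pos: "0 < A" and \<theta>_pos: "0 < \<theta>"
begin

lemma survival_bound_nonneg: "0 \<le> survival_bound A \<theta> k s"
  unfolding survival_bound_def using A_pos \<theta>_pos by simp

lemma survival_denominator_pos: "0 \<le> x \<Longrightarrow> 0 < A + \<theta> * x"
  using A_pos \<theta>_pos by (simp add: add_pos_nonneg)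

lemma survival_bound_0: "survival_bound A \<theta> 0 s = 1"
  unfolding survival_bound_def using survival_denominator_pos[of "real s"] by simp

lemma survival_bound_mono:
  assumes "s \<le> s'"
  shows "survival_bound A \<theta> k s \<le> survival_bound A \<theta> k s'"
proof -
  have "(A + \<theta> * real s) * (A + \<theta> * (real s' + real k)) \<le> (A + \<theta> * real s') * (A + \<theta> * (real s + real k))"
  proof -
    have "\<theta> * real s * (\<theta> * real k) \<le> \<theta> * real s' * (\<theta> * real k)"
      using assms \<theta>_pos by (intro mult_right_mono mult_left_mono) auto
    moreover have "A * (\<theta> * real s) \<le> A * (\<theta> * real s')"
      using assms \<theta>_pos A_pos by (intro mult_left_mono) auto
    ultimately show ?thesis by (simp add: algebra_simps)
  qed
  moreover have "0 < A + \<theta> * (real s + real k)" "0 < A + \<theta> * (real s' + real k)"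
    by (simp_all add: survival_denominator_pos)
  ultimately show ?thesis unfolding survival_bound_def by (simp add: divide_simps)
qed

lemma survival_bound_Suc:
  assumes "0 \<le> R" "R \<le> A + \<theta> * real s" "\<theta> \<le> e"
  shows "R / (e + R) * survival_bound A \<theta> k (Suc s) \<le> survival_bound A \<theta> (Suc k) s"
proof -
  have pos: "0 < A + \<theta> * real s" by (simp add: survival_denominator_pos)
  have "R * \<theta> \<le> (A + \<theta> * real s) * e"
    using mult_mono[OF assms(2,3)] assms(1) \<theta>_pos pos by (simp add: mult.commute)
  then have "R * (A + \<theta> * (real s + 1)) \<le> (A + \<theta> * real s) * (e + R)"
    by (simp add: algebra_simps)
  then have "R / (e + R) \<le> (A + \<theta> * real s) / (A + \<theta> * (real s + 1))"
    using assms A_pos \<theta>_pos pos by (simp add: divide_simps add_pos_nonneg)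
  then have "R / (e + R) * survival_bound A \<theta> k (Suc s)
      \<le> (A + \<theta> * real s) / (A + \<theta> * (real s + 1)) * survival_bound A \<theta> k (Suc s)"
    using survival_bound_nonneg by (rule mult_right_mono)
  also have "\<dots> = survival_bound A \<theta> (Suc k) s"
  proof -
    have "A + \<theta> * (real s + 1) \<noteq> 0" using survival_denominator_pos[of "real s + 1"] by simp
    moreover have "real (Suc s) + real k = real s + real (Suc k)" by simp
    ultimately show ?thesis unfolding survival_bound_def by (simp add: add.commute)
  qed
  finally show ?thesis .
qed

lemma survival_bound_small:
  assumes "0 < \<epsilon>"
  obtains k where "survival_bound A \<theta> k s \<le> \<epsilon>"
proof
  define k where "k = nat \<lceil>(A + \<theta> * real s) / (\<theta> * \<epsilon>)\<rceil>"
  have "(A + \<theta> * real s) / (\<theta> * \<epsilon>) \<le> real k" unfolding k_def by linarith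
  then have "A + \<theta> * real s \<le> \<theta> * \<epsilon> * real k"
    using \<theta>_pos assms by (simp add: divide_le_eq mult.commute)
  also have "\<dots> \<le> \<epsilon> * (A + \<theta> * (real s + real k))"
    using A_pos \<theta>_pos assms by (simp add: algebra_simps)
  finally show "survival_bound A \<theta> k s \<le> \<epsilon>"
    unfolding survival_bound_def using A_pos \<theta>_pos
    by (simp add: divide_simps add_pos_nonneg mult.commute)
qed

end

lemma infsum_finite_jumps:
  fixes h :: "'s \<Rightarrow> ennreal"
  assumes "finite Y" and "\<And>y. y \<in> Y \<Longrightarrow> 0 \<le> V y"
  shows "(\<Sum>\<^sub>\<infinity>n'. ennreal (\<Sum>y\<in>Y. if n' = D y then V y else 0) * h n')
       = (\<Sum>y\<in>Y. ennreal (V y) * h (D y))"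
proof -
  have "ennreal (\<Sum>y\<in>Y. if n' = D y then V y else 0) * h n'
      = (\<Sum>y\<in>Y. if n' = D y then ennreal (V y) * h (D y) else 0)" for n'
  proof -
    have "ennreal (\<Sum>y\<in>Y. if n' = D y then V y else 0) = (\<Sum>y\<in>Y. ennreal (if n' = D y then V y else 0))"
      by (rule sum_ennreal[symmetric]) (use assms(2) in auto)
    then show ?thesis by (auto simp: sum_distrib_right intro!: sum.cong)
  qed
  then have "(\<Sum>\<^sub>\<infinity>n'. ennreal (\<Sum>y\<in>Y. if n' = D y then V y else 0) * h n')
      = (\<Sum>\<^sub>\<infinity>n'\<in>D ` Y. \<Sum>y\<in>Y. if n' = D y then ennreal (V y) * h (D y) else 0)"
    by (simp, intro infsum_cong_neutral) (auto intro!: sum.neutral)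
  also have "\<dots> = (\<Sum>n'\<in>D ` Y. \<Sum>y\<in>Y. if n' = D y then ennreal (V y) * h (D y) else 0)"
    using assms(1) by simp
  also have "\<dots> = (\<Sum>y\<in>Y. \<Sum>n'\<in>D ` Y. if n' = D y then ennreal (V y) * h (D y) else 0)"
    by (rule sum.swap)
  also have "\<dots> = (\<Sum>y\<in>Y. ennreal (V y) * h (D y))"
    using assms(1) by (simp add: sum.delta)
  finally show ?thesis .
qed

text \<open>A continuous-time chain that jumps from \<open>n\<close> to \<open>D n y\<close> at rate \<open>V n y\<close> (\<open>y \<in> Y\<close>) and is
  killed at rate \<open>e n\<close>. Its expected time to killing is the least fixed point of the first-step
  operator \<open>exit_op\<close>, which is how \<^const>\<open>sojourn\<close> is defined.\<close>
locale killed_chain =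
  fixes Y :: "'y set" and V :: "'s \<Rightarrow> 'y \<Rightarrow> real" and D :: "'s \<Rightarrow> 'y \<Rightarrow> 's"
    and e :: "'s \<Rightarrow> real"
  assumes finite_jumps: "finite Y" and jump_rate_nonneg: "y \<in> Y \<Longrightarrow> 0 \<le> V n y"
begin

definition exit_op :: "('s \<Rightarrow> ennreal) \<Rightarrow> 's \<Rightarrow> ennreal" where
  "exit_op h n = (1 + (\<Sum>y\<in>Y. ennreal (V n y) * h (D n y)))
                  / (ennreal (e n) + (\<Sum>y\<in>Y. ennreal (V n y)))"

definition total_rate :: "'s \<Rightarrow> real" where
  "total_rate n = (\<Sum>y\<in>Y. V n y)"

lemma total_rate_nonneg: "0 \<le> total_rate n"
  unfolding total_rate_def using jump_rate_nonneg by (simp add: sum_nonneg)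

lemma mono_exit_op: "mono exit_op"
proof (rule monoI, rule le_funI)
  fix h h' :: "'s \<Rightarrow> ennreal" and n
  assume "h \<le> h'"
  then have "(\<Sum>y\<in>Y. ennreal (V n y) * h (D n y)) \<le> (\<Sum>y\<in>Y. ennreal (V n y) * h' (D n y))"
    by (intro sum_mono mult_left_mono) (auto simp: le_fun_def)
  then show "exit_op h n \<le> exit_op h' n"
    unfolding exit_op_def by (intro divide_right_mono_ennreal add_left_mono)
qed

lemma exit_op_real:
  assumes f_nonneg: "\<And>m. 0 \<le> f m" and "0 < e n"
  shows "exit_op (\<lambda>m. ennreal (f m)) n
    = ennreal ((1 + (\<Sum>y\<in>Y. V n y * f (D n y))) / (e n + total_rate n))"
proof -
  have S: "0 \<le> (\<Sum>y\<in>Y. V n y * f (D n y))"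
    using jump_rate_nonneg f_nonneg by (intro sum_nonneg mult_nonneg_nonneg) auto
  have "(\<Sum>y\<in>Y. ennreal (V n y) * ennreal (f (D n y))) = ennreal (\<Sum>y\<in>Y. V n y * f (D n y))"
    using jump_rate_nonneg f_nonneg by (simp add: ennreal_mult[symmetric])
  moreover have "(\<Sum>y\<in>Y. ennreal (V n y)) = ennreal (total_rate n)"
    unfolding total_rate_def using jump_rate_nonneg by simp
  moreover have "1 + ennreal (\<Sum>y\<in>Y. V n y * f (D n y)) = ennreal (1 + (\<Sum>y\<in>Y. V n y * f (D n y)))"
    using S by simp
  moreover have "ennreal (e n) + ennreal (total_rate n) = ennreal (e n + total_rate n)"
    using total_rate_nonneg[of n] \<open>0 < e n\<close> by simp
  ultimately show ?thesis
    unfolding exit_op_def using S total_rate_nonneg[of n] \<open>0 < e n\<close>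
    by (simp del: ennreal_plus add: divide_ennreal)
qed

lemma lfp_exit_op_le_supersolution:
  assumes f_nonneg: "\<And>m. 0 \<le> f m" and e_pos: "\<And>m. 0 < e m"
    and super: "\<And>m. 1 + (\<Sum>y\<in>Y. V m y * f (D m y)) \<le> (e m + total_rate m) * f m"
  shows "lfp exit_op n \<le> ennreal (f n)"
proof -
  have "lfp exit_op \<le> (\<lambda>m. ennreal (f m))"
  proof (rule lfp_lowerbound, rule le_funI)
    fix m
    have "(1 + (\<Sum>y\<in>Y. V m y * f (D m y))) / (e m + total_rate m) \<le> f m"
      using super[of m] e_pos[of m] total_rate_nonneg[of m]
      by (simp add: pos_divide_le_eq mult.commute)
    then show "exit_op (\<lambda>m. ennreal (f m)) m \<le> ennreal (f m)"
      by (simp add: exit_op_real[OF f_nonneg e_pos] ennreal_leI)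
  qed
  then show ?thesis by (simp add: le_fun_def)
qed

lemma lfp_exit_op_le_inverse:
  assumes "0 < \<theta>" and "\<And>m. \<theta> \<le> e m"
  shows "lfp exit_op n \<le> ennreal (1 / \<theta>)"
proof (rule lfp_exit_op_le_supersolution)
  fix m
  have "1 \<le> e m * (1 / \<theta>)" using assms by (simp add: divide_simps)
  then show "1 + (\<Sum>y\<in>Y. V m y * (1 / \<theta>)) \<le> (e m + total_rate m) * (1 / \<theta>)"
    by (simp add: total_rate_def sum_divide_distrib[symmetric] add_divide_distrib)
qed (use assms in \<open>auto intro: less_le_trans\<close>)

lemma lfp_exit_op_real_solution:
  assumes "0 < \<theta>" and "\<And>m. \<theta> \<le> e m"
  defines "g \<equiv> \<lambda>m. enn2real (lfp exit_op m)"
  shows "g n \<le> 1 / \<theta>" and "(e n + total_rate n) * g n = 1 + (\<Sum>y\<in>Y. V n y * g (D n y))"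
proof -
  have bound: "lfp exit_op m \<le> ennreal (1 / \<theta>)" for m
    by (rule lfp_exit_op_le_inverse[OF assms(1,2)])
  have finite: "lfp exit_op m = ennreal (g m)" for m
  proof -
    have "lfp exit_op m < \<top>" using bound[of m] by (rule le_less_trans) simp
    then show ?thesis unfolding g_def by (simp add: ennreal_enn2real_if)
  qed
  have g_nonneg: "0 \<le> g m" for m
    unfolding g_def by simp
  show "g n \<le> 1 / \<theta>"
    using bound[of n] assms(1) unfolding finite by simp
  have e_pos: "0 < e n" using assms(1) assms(2)[of n] by linarith
  have lfp_eq: "lfp exit_op = (\<lambda>m. ennreal (g m))"
    using finite by blast
  have "exit_op (\<lambda>m. ennreal (g m)) = (\<lambda>m. ennreal (g m))"
    using lfp_fixpoint[OF mono_exit_op] unfolding lfp_eq .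
  then have "ennreal (g n) = exit_op (\<lambda>m. ennreal (g m)) n"
    by (simp add: fun_eq_iff)
  also have "\<dots> = ennreal ((1 + (\<Sum>y\<in>Y. V n y * g (D n y))) / (e n + total_rate n))"
    by (rule exit_op_real[OF g_nonneg e_pos])
  finally have "ennreal (g n) = ennreal ((1 + (\<Sum>y\<in>Y. V n y * g (D n y))) / (e n + total_rate n))" .
  moreover have "0 \<le> (1 + (\<Sum>y\<in>Y. V n y * g (D n y))) / (e n + total_rate n)"
    using e_pos total_rate_nonneg[of n] jump_rate_nonneg g_nonneg
    by (intro divide_nonneg_nonneg add_nonneg_nonneg sum_nonneg mult_nonneg_nonneg) auto
  ultimately have "g n = (1 + (\<Sum>y\<in>Y. V n y * g (D n y))) / (e n + total_rate n)"
    using ennreal_inj g_nonneg by blast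
  then show "(e n + total_rate n) * g n = 1 + (\<Sum>y\<in>Y. V n y * g (D n y))"
    using e_pos total_rate_nonneg[of n] by (simp add: divide_simps mult.commute)
qed

text \<open>The first-step equations may have several solutions. A bounded subsolution still lies below
  the minimal one when the total jump rate grows at most linearly in a population that increases
  by at most one per jump: then the chain makes \<open>k\<close> jumps before being killed with a probability
  that tends to zero.\<close>
context
  fixes \<theta> A W :: real and pop :: "'s \<Rightarrow> nat" and w :: "'s \<Rightarrow> ennreal"
  assumes \<theta>_pos: "0 < \<theta>" and A_pos: "0 < A" and exit_ge: "\<And>m. \<theta> \<le> e m"
    and total_rate_le: "\<And>m. total_rate m \<le> A + \<theta> * real (pop m)"
    and pop_step: "\<And>m y. y \<in> Y \<Longrightarrow> pop (D m y) \<le> Suc (pop m)"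
    and w_le: "\<And>m. w m \<le> ennreal W" and W_nonneg: "0 \<le> W"
    and subsolution: "\<And>m. w m \<le> exit_op w m"
begin

lemma subsolution_step:
  assumes IH: "\<And>m. w m \<le> h m + ennreal (W * survival_bound A \<theta> k (pop m))"
  shows "w n \<le> exit_op h n + ennreal (W * survival_bound A \<theta> (Suc k) (pop n))"
proof -
  define c where "c = W * survival_bound A \<theta> k (Suc (pop n))"
  define R where "R = total_rate n"
  have R_nonneg: "0 \<le> R" unfolding R_def by (rule total_rate_nonneg)
  have c_nonneg: "0 \<le> c" unfolding c_def using W_nonneg survival_bound_nonneg[OF A_pos \<theta>_pos] by simp
  have e_pos: "0 < e n" using exit_ge[of n] \<theta>_pos by linarith
  have sum_V: "(\<Sum>y\<in>Y. ennreal (V n y)) = ennreal R"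
    unfolding R_def total_rate_def using jump_rate_nonneg by simp
  have denominator: "ennreal (e n) + (\<Sum>y\<in>Y. ennreal (V n y)) = ennreal (e n + R)"
    using sum_V R_nonneg e_pos by simp
  have w_target: "w (D n y) \<le> h (D n y) + ennreal c" if "y \<in> Y" for y
  proof -
    have "w (D n y) \<le> h (D n y) + ennreal (W * survival_bound A \<theta> k (pop (D n y)))"
      by (rule IH)
    also have "\<dots> \<le> h (D n y) + ennreal c"
      unfolding c_def using survival_bound_mono[OF A_pos \<theta>_pos pop_step[OF that]] W_nonneg
      by (intro add_left_mono ennreal_leI mult_left_mono)
    finally show ?thesis .
  qed
  have "(\<Sum>y\<in>Y. ennreal (V n y) * w (D n y)) \<le> (\<Sum>y\<in>Y. ennreal (V n y) * (h (D n y) + ennreal c))"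
    using w_target by (intro sum_mono mult_left_mono) auto
  also have "\<dots> = (\<Sum>y\<in>Y. ennreal (V n y) * h (D n y)) + ennreal (R * c)"
    using sum_V R_nonneg c_nonneg
    by (simp add: distrib_left sum.distrib sum_distrib_right[symmetric] ennreal_mult)
  finally have "exit_op w n
      \<le> (1 + ((\<Sum>y\<in>Y. ennreal (V n y) * h (D n y)) + ennreal (R * c))) / ennreal (e n + R)"
    unfolding exit_op_def denominator by (intro divide_right_mono_ennreal add_left_mono)
  with subsolution[of n]
  have "w n \<le> (1 + ((\<Sum>y\<in>Y. ennreal (V n y) * h (D n y)) + ennreal (R * c))) / ennreal (e n + R)"
    by (rule order_trans)
  also have "\<dots> = exit_op h n + ennreal (R / (e n + R) * c)"
  proof -
    have "ennreal (R * c) / ennreal (e n + R) = ennreal (R / (e n + R) * c)"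
      using divide_ennreal[of "R * c" "e n + R"] R_nonneg c_nonneg e_pos by simp
    then show ?thesis
      unfolding exit_op_def denominator by (simp add: add_divide_distrib_ennreal add.assoc)
  qed
  also have "exit_op h n + ennreal (R / (e n + R) * c)
      \<le> exit_op h n + ennreal (W * survival_bound A \<theta> (Suc k) (pop n))"
  proof (intro add_left_mono ennreal_leI)
    have "R / (e n + R) * survival_bound A \<theta> k (Suc (pop n)) \<le> survival_bound A \<theta> (Suc k) (pop n)"
      by (rule survival_bound_Suc[OF A_pos \<theta>_pos R_nonneg _ exit_ge]) (use total_rate_le in \<open>simp add: R_def\<close>)
    from mult_left_mono[OF this W_nonneg]
    show "R / (e n + R) * c \<le> W * survival_bound A \<theta> (Suc k) (pop n)"
      unfolding c_def by (simp add: mult.left_commute)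
  qed
  finally show ?thesis .
qed

lemma subsolution_le_iterate:
  "w n \<le> (exit_op ^^ k) h\<^sub>0 n + ennreal (W * survival_bound A \<theta> k (pop n))"
proof (induction k arbitrary: n)
  case 0
  have "w n \<le> h\<^sub>0 n + ennreal W"
    using w_le[of n] by (rule order_trans) (rule add_increasing[OF zero_le order_refl])
  then show ?case using survival_bound_0[OF A_pos \<theta>_pos] by simp
next
  case (Suc k)
  then show ?case using subsolution_step[OF Suc.IH] by simp
qed

lemma bounded_subsolution_le_lfp: "w n \<le> lfp exit_op n"
proof (rule ennreal_le_epsilon)
  fix \<epsilon> :: real
  assume "0 < \<epsilon>"
  with W_nonneg have "0 < \<epsilon> / (W + 1)" by simp
  then obtain k where k: "survival_bound A \<theta> k (pop n) \<le> \<epsilon> / (W + 1)"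
    by (rule survival_bound_small[OF A_pos \<theta>_pos])
  have "W * survival_bound A \<theta> k (pop n) \<le> (W + 1) * (\<epsilon> / (W + 1))"
    using k W_nonneg survival_bound_nonneg[OF A_pos \<theta>_pos] by (intro mult_mono) auto
  then have small: "W * survival_bound A \<theta> k (pop n) \<le> \<epsilon>"
    using W_nonneg by simp
  have iterate: "(exit_op ^^ k) bot \<le> lfp exit_op"
  proof (induction k)
    case (Suc k)
    then have "exit_op ((exit_op ^^ k) bot) \<le> exit_op (lfp exit_op)"
      by (rule monoD[OF mono_exit_op])
    then show ?case by (simp only: funpow.simps(2) o_apply lfp_fixpoint[OF mono_exit_op])
  qed (simp add: le_fun_def)
  have "w n \<le> (exit_op ^^ k) bot n + ennreal (W * survival_bound A \<theta> k (pop n))"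
    by (rule subsolution_le_iterate)
  also have "\<dots> \<le> lfp exit_op n + ennreal \<epsilon>"
    using le_funD[OF iterate, of n] small by (intro add_mono ennreal_leI)
  finally show "w n \<le> lfp exit_op n + ennreal \<epsilon>" .
qed

end

end

section \<open>The lowest-priority benchmark\<close>

text \<open>The benchmark: an agent served (at rate \<open>\<mu>\<close>) only when none of its \<open>c\<close> rivals is waiting.
  Rivals arrive at rate \<open>a\<close>, each abandons at rate \<open>\<theta>\<close>, and while there are any, one of them is
  served at rate \<open>\<mu>\<close>.\<close>
definition rival_departure_rate :: "real \<Rightarrow> real \<Rightarrow> nat \<Rightarrow> real" where
  "rival_departure_rate \<theta> \<mu> c = \<theta> * real c + (if 0 < c then \<mu> else 0)"

definition last_in_line_exit_rate :: "real \<Rightarrow> real \<Rightarrow> nat \<Rightarrow> real" where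
  "last_in_line_exit_rate \<theta> \<mu> c = \<theta> + (if c = 0 then \<mu> else 0)"

definition last_in_line_time :: "real \<Rightarrow> real \<Rightarrow> real \<Rightarrow> nat \<Rightarrow> real" where
  "last_in_line_time a \<theta> \<mu> c = enn2real (lfp (killed_chain.exit_op {True, False}
      (\<lambda>c up. if up then a else rival_departure_rate \<theta> \<mu> c) (\<lambda>c up. if up then Suc c else c - 1)
      (last_in_line_exit_rate \<theta> \<mu>)) c)"

lemma last_in_line_time:
  assumes "0 \<le> a" and "0 < \<theta>" and "0 \<le> \<mu>"
  defines "g \<equiv> last_in_line_time a \<theta> \<mu>"
  shows "0 \<le> g c" and "g c \<le> 1 / \<theta>"
    and "1 + a * (g (Suc c) - g c) + rival_departure_rate \<theta> \<mu> c * (g (c - 1) - g c)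
      = last_in_line_exit_rate \<theta> \<mu> c * g c"
proof -
  interpret killed_chain "{True, False}" "\<lambda>c up. if up then a else rival_departure_rate \<theta> \<mu> c"
    "\<lambda>c up. if up then Suc c else c - 1" "last_in_line_exit_rate \<theta> \<mu>"
    by unfold_locales (use assms in \<open>auto simp: rival_departure_rate_def\<close>)
  have exit_ge: "\<theta> \<le> last_in_line_exit_rate \<theta> \<mu> c" for c
    using assms by (simp add: last_in_line_exit_rate_def)
  have g: "g c = enn2real (lfp exit_op c)" for c
    by (simp add: g_def last_in_line_time_def)
  show "0 \<le> g c"
    by (simp add: g)
  show "g c \<le> 1 / \<theta>"
    using lfp_exit_op_real_solution(1)[OF assms(2) exit_ge] by (simp add: g)
  show "1 + a * (g (Suc c) - g c) + rival_departure_rate \<theta> \<mu> c * (g (c - 1) - g c)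
      = last_in_line_exit_rate \<theta> \<mu> c * g c"
    using lfp_exit_op_real_solution(2)[OF assms(2) exit_ge, of c] by (simp add: g total_rate_def algebra_simps)
qed

text \<open>In its own queue the tagged agent is served at rate \<open>p = \<mu> / (c + 1)\<close> and its rivals at rate
  \<open>\<mu> - p\<close>: compared with the benchmark it gains \<open>p\<close> in exit rate and loses at most \<open>p * Y\<close>.\<close>
lemma own_queue_supersolution:
  fixes a \<theta> \<mu> p R X Y Z :: real and c :: nat
  assumes step: "1 + a * (X - Z) + rival_departure_rate \<theta> \<mu> c * (Y - Z) = last_in_line_exit_rate \<theta> \<mu> c * Z"
    and "0 \<le> p * Y" and "c = 0 \<Longrightarrow> p = \<mu>"
  shows "1 + (R * Z + a * (X - Z) + (\<theta> * real c + (\<mu> - p)) * (Y - Z)) \<le> (\<theta> + p + R) * Z"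
proof (cases "c = 0")
  case True
  then show ?thesis
    using assms by (simp add: rival_departure_rate_def last_in_line_exit_rate_def algebra_simps)
next
  case False
  then have "1 + a * (X - Z) + (\<theta> * real c + \<mu>) * (Y - Z) = \<theta> * Z"
    using step by (simp add: rival_departure_rate_def last_in_line_exit_rate_def)
  then show ?thesis
    using assms(2) by (simp add: algebra_simps)
qed

section \<open>ACR transitions\<close>

text \<open>\<open>Arrival k r\<close>: a type \<open>k\<close> agent joins queue \<open>r\<close>; \<open>Abandonment r k\<close>: a type \<open>k\<close> agent leaves
  queue \<open>r\<close>; \<open>Service j k\<close>: a type \<open>j\<close> job is taken by a type \<open>k\<close> agent of the queue it is routed to.\<close>
datatype event = Arrival nat nat | Abandonment nat nat | Service nat nat

definition events :: "nat \<Rightarrow> event set" where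
  "events l = (\<lambda>(k, r). Arrival k r) ` ({..l} \<times> {..l}) \<union> (\<lambda>(r, k). Abandonment r k) ` ({..l} \<times> {..l})
     \<union> (\<lambda>(j, k). Service j k) ` ({..l} \<times> {..l})"

lemma finite_events: "finite (events l)"
  by (simp add: events_def)

lemma sum_events:
  fixes f :: "event \<Rightarrow> 'a::comm_monoid_add"
  shows "sum f (events l) = (\<Sum>k\<le>l. \<Sum>r\<le>l. f (Arrival k r)) + (\<Sum>r\<le>l. \<Sum>k\<le>l. f (Abandonment r k))
    + (\<Sum>j\<le>l. \<Sum>k\<le>l. f (Service j k))"
proof -
  have reindex: "sum f ((\<lambda>(a, b). C a b) ` ({..l} \<times> {..l})) = (\<Sum>a\<le>l. \<Sum>b\<le>l. f (C a b))"
    if "\<And>a b a' b'. C a b = C a' b' \<Longrightarrow> a = a' \<and> b = b'" for C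
    using that by (subst sum.reindex) (auto simp: inj_on_def sum.cartesian_product case_prod_unfold)
  have "sum f ((\<lambda>(k, r). Arrival k r) ` ({..l} \<times> {..l})) = (\<Sum>k\<le>l. \<Sum>r\<le>l. f (Arrival k r))"
    "sum f ((\<lambda>(r, k). Abandonment r k) ` ({..l} \<times> {..l})) = (\<Sum>r\<le>l. \<Sum>k\<le>l. f (Abandonment r k))"
    "sum f ((\<lambda>(j, k). Service j k) ` ({..l} \<times> {..l})) = (\<Sum>j\<le>l. \<Sum>k\<le>l. f (Service j k))"
    by (rule reindex; simp)+
  then show ?thesis
    unfolding events_def by (subst sum.union_disjoint; auto)+
qed

context
  fixes l :: nat and lam mu :: "nat \<Rightarrow> real" and \<theta> :: real and \<sigma> :: "nat \<Rightarrow> nat \<Rightarrow> real"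
begin

text \<open>The target of an unroutable job is junk; its rate is zero.\<close>
fun event_target :: "(nat \<times> nat) option \<Rightarrow> state \<Rightarrow> event \<Rightarrow> state" where
  "event_target t n (Arrival k r) = incr n r k"
| "event_target t n (Abandonment r k) = decr n r k"
| "event_target t n (Service j k) = decr n (the (route l (with_tagged n t) j)) k"

fun event_rate :: "(nat \<times> nat) option \<Rightarrow> state \<Rightarrow> event \<Rightarrow> real" where
  "event_rate t n (Arrival k r) = lam k * \<sigma> k r"
| "event_rate t n (Abandonment r k) = \<theta> * real (n r k)"
| "event_rate t n (Service j k) = (case route l (with_tagged n t) j of
      None \<Rightarrow> 0
    | Some r \<Rightarrow> if compat k j then mu j * real (n r k) / real (compat_count l (with_tagged n t) r j) else 0)"

lemma rate_eq_event_sum: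
  "rate l lam mu \<theta> \<sigma> t n n' = (\<Sum>y\<in>events l. if n' = event_target t n y then event_rate t n y else 0)"
proof -
  have abandonments: "(if 0 < n r k \<and> n' = decr n r k then \<theta> * real (n r k) else 0)
      = (if n' = decr n r k then \<theta> * real (n r k) else 0)" for r k
    by auto
  have services: "(case route l (with_tagged n t) j of None \<Rightarrow> 0
        | Some r \<Rightarrow> (\<Sum>k\<le>l. if compat k j \<and> 0 < n r k \<and> n' = decr n r k
            then mu j * real (n r k) / real (compat_count l (with_tagged n t) r j) else 0))
      = (\<Sum>k\<le>l. if n' = event_target t n (Service j k) then event_rate t n (Service j k) else 0)" for j
    by (cases "route l (with_tagged n t) j") (auto intro!: sum.cong sum.neutral)
  show ?thesis
    unfolding rate_def sum_events abandonments services by (simp cong: if_cong)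
qed

lemma event_rate_nonneg:
  assumes "\<forall>k\<le>l. 0 \<le> lam k" and "\<forall>j\<le>l. 0 \<le> mu j" and "0 \<le> \<theta>" and "\<forall>k\<le>l. \<forall>r\<le>l. 0 \<le> \<sigma> k r"
    and "y \<in> events l"
  shows "0 \<le> event_rate t n y"
  using assms by (auto simp: events_def split: option.split)

end

lemma incr_apply: "incr n r k r' k' = (if r' = r \<and> k' = k then n r k + 1 else n r' k')"
  by (simp add: incr_def)

lemma decr_apply: "decr n r k r' k' = (if r' = r \<and> k' = k then n r k - 1 else n r' k')"
  by (simp add: decr_def)

lemma sum_if_zero_or_eq:
  fixes g :: "nat \<Rightarrow> 'a::comm_monoid_add"
  assumes "1 \<le> i" and "i \<le> l"
  shows "(\<Sum>a\<le>l. if a = 0 \<or> a = i then g a else 0) = g 0 + g i"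
proof -
  have "(\<Sum>a\<le>l. if a = 0 \<or> a = i then g a else 0)
      = (\<Sum>a\<le>l. (if a = 0 then g a else 0) + (if a = i then g a else 0))"
    using assms by (intro sum.cong) auto
  also have "\<dots> = g 0 + g i"
    using assms by (simp add: sum.distrib)
  finally show ?thesis .
qed

lemma compat_count_specialized:
  "1 \<le> j \<Longrightarrow> j \<le> l \<Longrightarrow> compat_count l n r j = n r 0 + n r j"
  unfolding compat_count_def compat_def by (rule sum_if_zero_or_eq)

lemma compat_count_pos_of_route: "route l m j = Some r \<Longrightarrow> 0 < compat_count l m r j"
  by (auto simp: route_def split: if_splits)

lemma route_specialized:
  "1 \<le> i \<Longrightarrow> route l m i =
     (if 0 < compat_count l m i i then Some i else if 0 < compat_count l m 0 i then Some 0 else None)"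
  by (simp add: route_def)

lemma route_eq_Some_specialized: "1 \<le> i \<Longrightarrow> route l m j = Some i \<Longrightarrow> j = i"
  by (auto simp: route_def split: if_splits)

lemma exit_rate_specialized:
  assumes "1 \<le> i" and "i \<le> l"
  shows "exit_rate l mu \<theta> i q n = \<theta> + (if route l (incr n q i) i = Some q
      then mu i / real (compat_count l (incr n q i) q i) else 0)"
proof -
  have "(\<Sum>j\<le>l. if route l (incr n q i) j = Some q \<and> compat i j
          then mu j / real (compat_count l (incr n q i) q j) else 0)
     = (\<Sum>j\<le>l. if j = i then (if route l (incr n q i) i = Some q
          then mu i / real (compat_count l (incr n q i) q i) else 0) else 0)"
    using assms by (intro sum.cong) (auto simp: compat_def)
  then show ?thesis unfolding exit_rate_def using assms by simp
qed

context
  fixes l :: nat and lam mu :: "nat \<Rightarrow> real" and \<theta> :: real and \<sigma> :: "nat \<Rightarrow> nat \<Rightarrow> real"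
    and i :: nat
  assumes i_pos: "1 \<le> i" and i_le: "i \<le> l"
begin

text \<open>The tagged agent, if any, is not part of the state \<open>n\<close>, so it is not counted among its rivals.\<close>
abbreviation rivals :: "state \<Rightarrow> nat" where
  "rivals n \<equiv> compat_count l n i i"

lemma rivals_incr: "rivals (incr n r k) = rivals n + (if r = i \<and> (k = 0 \<or> k = i) then 1 else 0)"
  using i_pos i_le by (auto simp: compat_count_specialized incr_apply)

lemma rivals_decr:
  "0 < n r k \<Longrightarrow> rivals (decr n r k) = rivals n - (if r = i \<and> (k = 0 \<or> k = i) then 1 else 0)"
  using i_pos i_le by (auto simp: compat_count_specialized decr_apply)

lemma arrivals_rivals:
  "(\<Sum>k\<le>l. \<Sum>r\<le>l. event_rate l lam mu \<theta> \<sigma> t n (Arrival k r)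
       * (f (rivals (event_target l t n (Arrival k r))) - f (rivals n)))
   = (lam 0 * \<sigma> 0 i + lam i * \<sigma> i i) * (f (Suc (rivals n)) - f (rivals n))"
proof -
  have "event_rate l lam mu \<theta> \<sigma> t n (Arrival k r)
       * (f (rivals (event_target l t n (Arrival k r))) - f (rivals n))
     = (if r = i then if k = 0 \<or> k = i then lam k * \<sigma> k i * (f (Suc (rivals n)) - f (rivals n))
        else 0 else 0)" for k r
    by (auto simp: rivals_incr)
  then show ?thesis
    using i_pos i_le by (simp add: sum_if_zero_or_eq algebra_simps)
qed

lemma abandonments_rivals:
  "(\<Sum>r\<le>l. \<Sum>k\<le>l. event_rate l lam mu \<theta> \<sigma> t n (Abandonment r k)
       * (f (rivals (event_target l t n (Abandonment r k))) - f (rivals n)))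
   = \<theta> * real (rivals n) * (f (rivals n - 1) - f (rivals n))"
proof -
  have "event_rate l lam mu \<theta> \<sigma> t n (Abandonment r k)
       * (f (rivals (event_target l t n (Abandonment r k))) - f (rivals n))
     = (if r = i then if k = 0 \<or> k = i then \<theta> * real (n i k) * (f (rivals n - 1) - f (rivals n))
        else 0 else 0)" for r k
    by (cases "n r k = 0") (auto simp: rivals_decr)
  then have "(\<Sum>r\<le>l. \<Sum>k\<le>l. event_rate l lam mu \<theta> \<sigma> t n (Abandonment r k)
       * (f (rivals (event_target l t n (Abandonment r k))) - f (rivals n)))
     = (\<Sum>r\<le>l. if r = i then \<Sum>k\<le>l. if k = 0 \<or> k = i
          then \<theta> * real (n i k) * (f (rivals n - 1) - f (rivals n)) else 0 else 0)"
    by (intro sum.cong) auto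
  then show ?thesis
    using i_pos i_le by (simp add: sum_if_zero_or_eq compat_count_specialized algebra_simps)
qed

lemma service_rivals:
  fixes n :: state and t :: "(nat \<times> nat) option" and f :: "nat \<Rightarrow> real"
  defines "M \<equiv> rivals (with_tagged n t)" and "X \<equiv> f (rivals n - 1) - f (rivals n)"
  shows "event_rate l lam mu \<theta> \<sigma> t n (Service j k)
       * (f (rivals (event_target l t n (Service j k))) - f (rivals n))
     = (if j = i then if 0 < M then if k = 0 \<or> k = i then mu i * real (n i k) / real M * X
        else 0 else 0 else 0)"
proof (cases "route l (with_tagged n t) j")
  case None
  then have "\<not> (j = i \<and> 0 < M)"
    unfolding M_def using route_specialized[OF i_pos, of l "with_tagged n t"] by (auto split: if_splits)
  with None show ?thesis by auto
next
  case (Some r)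
  show ?thesis
  proof (cases "r = i")
    case True
    with Some have "j = i"
      using route_eq_Some_specialized[OF i_pos] by simp
    moreover have "0 < M"
      unfolding M_def using compat_count_pos_of_route[OF Some] True \<open>j = i\<close> by simp
    ultimately show ?thesis
      using Some True
      unfolding M_def X_def by (cases "n i k = 0") (auto simp: compat_def rivals_decr)
  next
    case False
    with Some have "\<not> (j = i \<and> 0 < M)"
      unfolding M_def using route_specialized[OF i_pos, of l "with_tagged n t"] by (auto split: if_splits)
    with Some False show ?thesis
      by (cases "n r k = 0") (auto simp: rivals_decr)
  qed
qed

lemma services_rivals:
  "(\<Sum>j\<le>l. \<Sum>k\<le>l. event_rate l lam mu \<theta> \<sigma> t n (Service j k)
       * (f (rivals (event_target l t n (Service j k))) - f (rivals n)))
   = (if 0 < rivals (with_tagged n t) then mu i * real (rivals n) / real (rivals (with_tagged n t)) else 0)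
       * (f (rivals n - 1) - f (rivals n))"
proof -
  define M where "M = rivals (with_tagged n t)"
  define X where "X = f (rivals n - 1) - f (rivals n)"
  have "(\<Sum>k\<le>l. event_rate l lam mu \<theta> \<sigma> t n (Service j k)
       * (f (rivals (event_target l t n (Service j k))) - f (rivals n)))
     = (if j = i then if 0 < M then \<Sum>k\<le>l. if k = 0 \<or> k = i then mu i * real (n i k) / real M * X
        else 0 else 0 else 0)" for j
    unfolding M_def X_def service_rivals by (cases "j = i \<and> 0 < rivals (with_tagged n t)") auto
  then show ?thesis
    using i_pos i_le unfolding M_def[symmetric] X_def[symmetric]
    by (cases "0 < M") (simp_all add: sum_if_zero_or_eq compat_count_specialized add_divide_distrib algebra_simps)
qed

text \<open>Lumpability: seen through the number of rivals, the system moves like a birth-death chain.\<close>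
lemma event_sum_rivals:
  "(\<Sum>y\<in>events l. event_rate l lam mu \<theta> \<sigma> t n y * f (rivals (event_target l t n y)))
   = (\<Sum>y\<in>events l. event_rate l lam mu \<theta> \<sigma> t n y) * f (rivals n)
     + (lam 0 * \<sigma> 0 i + lam i * \<sigma> i i) * (f (Suc (rivals n)) - f (rivals n))
     + (\<theta> * real (rivals n)
        + (if 0 < rivals (with_tagged n t) then mu i * real (rivals n) / real (rivals (with_tagged n t)) else 0))
       * (f (rivals n - 1) - f (rivals n))"
proof -
  have "(\<Sum>y\<in>events l. event_rate l lam mu \<theta> \<sigma> t n y * f (rivals (event_target l t n y)))
     = (\<Sum>y\<in>events l. event_rate l lam mu \<theta> \<sigma> t n y) * f (rivals n)
       + (\<Sum>y\<in>events l. event_rate l lam mu \<theta> \<sigma> t n y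
           * (f (rivals (event_target l t n y)) - f (rivals n)))"
    by (simp add: right_diff_distrib sum_subtractf sum_distrib_right[symmetric])
  then show ?thesis
    unfolding sum_events[where l = l] arrivals_rivals abandonments_rivals services_rivals
    by (simp add: algebra_simps)
qed

end

definition population :: "nat \<Rightarrow> state \<Rightarrow> nat" where
  "population l n = (\<Sum>r\<le>l. \<Sum>k\<le>l. n r k)"

lemma population_incr: "r \<le> l \<Longrightarrow> k \<le> l \<Longrightarrow> population l (incr n r k) = Suc (population l n)"
proof -
  assume "r \<le> l" "k \<le> l"
  have "population l (incr n r k) = (\<Sum>r'\<le>l. \<Sum>k'\<le>l. n r' k' + (if r' = r \<and> k' = k then 1 else 0))"
    unfolding population_def by (intro sum.cong refl) (auto simp: incr_apply)
  also have "\<dots> = population l n + (\<Sum>r'\<le>l. \<Sum>k'\<le>l. if r' = r \<and> k' = k then 1 else 0)"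
    unfolding population_def by (simp add: sum.distrib)
  also have "(\<Sum>r'\<le>l. \<Sum>k'\<le>l. if r' = r \<and> k' = k then 1 else 0) = (\<Sum>r'\<le>l. if r' = r then 1 else 0 :: nat)"
    using \<open>k \<le> l\<close> by (intro sum.cong refl) auto
  finally show ?thesis
    using \<open>r \<le> l\<close> by simp
qed

lemma population_decr: "population l (decr n r k) \<le> population l n"
  unfolding population_def by (intro sum_mono) (auto simp: decr_apply)

lemma population_event_target:
  "y \<in> events l \<Longrightarrow> population l (event_target l t n y) \<le> Suc (population l n)"
  by (auto simp: events_def population_incr population_decr le_SucI)

context
  fixes l :: nat and lam mu :: "nat \<Rightarrow> real" and \<theta> :: real and \<sigma> :: "nat \<Rightarrow> nat \<Rightarrow> real"
  assumes lam_nonneg: "\<forall>k\<le>l. 0 \<le> lam k" and mu_nonneg: "\<forall>j\<le>l. 0 \<le> mu j"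
    and \<sigma>_nonneg: "\<forall>k\<le>l. \<forall>r\<le>l. 0 \<le> \<sigma> k r"
begin

lemma service_rates_le: "j \<le> l \<Longrightarrow> (\<Sum>k\<le>l. event_rate l lam mu \<theta> \<sigma> t n (Service j k)) \<le> mu j"
proof (cases "route l (with_tagged n t) j")
  case None
  assume "j \<le> l"
  with None mu_nonneg show ?thesis by simp
next
  case (Some r)
  assume "j \<le> l"
  define M where "M = compat_count l (with_tagged n t) r j"
  have "0 < M" unfolding M_def by (rule compat_count_pos_of_route[OF Some])
  have "compat_count l n r j \<le> M"
    unfolding M_def compat_count_def
    by (intro sum_mono) (cases t; auto simp: with_tagged_def incr_apply)
  have "(\<Sum>k\<le>l. event_rate l lam mu \<theta> \<sigma> t n (Service j k))
      = (\<Sum>k\<le>l. mu j / real M * real (if compat k j then n r k else 0))"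
    using Some by (auto simp: M_def intro!: sum.cong)
  also have "\<dots> = mu j / real M * real (compat_count l n r j)"
    by (simp add: compat_count_def sum_distrib_left)
  also have "\<dots> \<le> mu j / real M * real M"
    using mu_nonneg \<open>j \<le> l\<close> \<open>compat_count l n r j \<le> M\<close> by (intro mult_left_mono) auto
  finally show ?thesis using \<open>0 < M\<close> by simp
qed

lemma total_event_rate_le:
  "(\<Sum>y\<in>events l. event_rate l lam mu \<theta> \<sigma> t n y)
     \<le> (1 + (\<Sum>k\<le>l. \<Sum>r\<le>l. lam k * \<sigma> k r) + (\<Sum>j\<le>l. mu j)) + \<theta> * real (population l n)"
proof -
  have "(\<Sum>r\<le>l. \<Sum>k\<le>l. event_rate l lam mu \<theta> \<sigma> t n (Abandonment r k)) = \<theta> * real (population l n)"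
    by (simp add: population_def sum_distrib_left)
  moreover have "(\<Sum>j\<le>l. \<Sum>k\<le>l. event_rate l lam mu \<theta> \<sigma> t n (Service j k)) \<le> (\<Sum>j\<le>l. mu j)"
    by (intro sum_mono service_rates_le) simp
  ultimately show ?thesis
    unfolding sum_events by simp
qed

end

section \<open>Comparison of queues\<close>

context
  fixes l :: nat and lam mu :: "nat \<Rightarrow> real" and \<theta> :: real and \<sigma> :: "nat \<Rightarrow> nat \<Rightarrow> real"
    and i :: nat
  assumes lam_nonneg: "\<forall>k\<le>l. 0 \<le> lam k" and mu_nonneg: "\<forall>j\<le>l. 0 \<le> mu j" and \<theta>_pos: "0 < \<theta>"
    and \<sigma>_nonneg: "\<forall>k\<le>l. \<forall>r\<le>l. 0 \<le> \<sigma> k r" and i_pos: "1 \<le> i" and i_le: "i \<le> l"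
begin

abbreviation own_arrival_rate :: real where
  "own_arrival_rate \<equiv> lam 0 * \<sigma> 0 i + lam i * \<sigma> i i"

abbreviation last_in_line :: "nat \<Rightarrow> real" where
  "last_in_line \<equiv> last_in_line_time own_arrival_rate \<theta> (mu i)"

abbreviation tagged_rate :: "nat \<Rightarrow> state \<Rightarrow> event \<Rightarrow> real" where
  "tagged_rate q \<equiv> event_rate l lam mu \<theta> \<sigma> (Some (q, i))"

abbreviation tagged_target :: "nat \<Rightarrow> state \<Rightarrow> event \<Rightarrow> state" where
  "tagged_target q \<equiv> event_target l (Some (q, i))"

lemma mu_i_nonneg: "0 \<le> mu i"
  using mu_nonneg i_le by simp

lemma own_arrival_rate_nonneg: "0 \<le> own_arrival_rate"
  using lam_nonneg \<sigma>_nonneg i_le by simp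

lemmas last_in_line_nonneg = last_in_line_time(1)[OF own_arrival_rate_nonneg \<theta>_pos mu_i_nonneg]
  and last_in_line_le = last_in_line_time(2)[OF own_arrival_rate_nonneg \<theta>_pos mu_i_nonneg]
  and last_in_line_step = last_in_line_time(3)[OF own_arrival_rate_nonneg \<theta>_pos mu_i_nonneg]

lemma tagged_killed_chain: "killed_chain (events l) (tagged_rate q)"
  by unfold_locales
    (use lam_nonneg mu_nonneg \<theta>_pos \<sigma>_nonneg in \<open>auto simp: finite_events intro: event_rate_nonneg\<close>)

lemma sojourn_eq_lfp:
  "sojourn l lam mu \<theta> \<sigma> i q
     = lfp (killed_chain.exit_op (events l) (tagged_rate q) (tagged_target q) (exit_rate l mu \<theta> i q))"
proof -
  interpret tagged: killed_chain "events l" "tagged_rate q" "tagged_target q" "exit_rate l mu \<theta> i q"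
    by (rule tagged_killed_chain)
  have jumps: "(\<Sum>\<^sub>\<infinity>n'. ennreal (rate l lam mu \<theta> \<sigma> (Some (q, i)) n n') * h n')
      = (\<Sum>y\<in>events l. ennreal (tagged_rate q n y) * h (tagged_target q n y))" for h n
    unfolding rate_eq_event_sum
    by (rule infsum_finite_jumps[OF finite_events tagged.jump_rate_nonneg])
  have "(\<Sum>\<^sub>\<infinity>n'. ennreal (rate l lam mu \<theta> \<sigma> (Some (q, i)) n n'))
      = (\<Sum>y\<in>events l. ennreal (tagged_rate q n y))" for n
    using jumps[where h = "\<lambda>_. 1"] by simp
  with jumps show ?thesis
    unfolding sojourn_def tagged.exit_op_def by simp
qed

lemma exit_rate_ge: "\<theta> \<le> exit_rate l mu \<theta> i q n"
  unfolding exit_rate_specialized[OF i_pos i_le] using mu_i_nonneg by simp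

lemma own_queue_supersolution_at:
  "1 + (\<Sum>y\<in>events l. tagged_rate i m y * last_in_line (rivals l i (tagged_target i m y)))
     \<le> (exit_rate l mu \<theta> i i m + (\<Sum>y\<in>events l. tagged_rate i m y)) * last_in_line (rivals l i m)"
proof -
  define c where "c = rivals l i m"
  define p where "p = mu i / real (Suc c)"
  define R where "R = (\<Sum>y\<in>events l. tagged_rate i m y)"
  have tagged_rivals: "rivals l i (with_tagged m (Some (i, i))) = Suc c"
    unfolding c_def with_tagged_def using rivals_incr[OF i_pos i_le] by simp
  have exit: "exit_rate l mu \<theta> i i m = \<theta> + p"
    using tagged_rivals route_specialized[OF i_pos, of l "incr m i i"]
    unfolding p_def exit_rate_specialized[OF i_pos i_le] by (simp add: with_tagged_def)
  have rivals_served: "mu i * real c / real (Suc c) = mu i - p"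
  proof -
    have "0 < real (Suc c)" by simp
    then show ?thesis
      unfolding p_def by (simp add: field_simps del: of_nat_Suc) (simp add: algebra_simps)
  qed
  have "0 \<le> p * last_in_line (c - 1)"
    using mu_i_nonneg last_in_line_nonneg unfolding p_def by simp
  then have "1 + (R * last_in_line c + own_arrival_rate * (last_in_line (Suc c) - last_in_line c)
      + (\<theta> * real c + (mu i - p)) * (last_in_line (c - 1) - last_in_line c))
    \<le> (\<theta> + p + R) * last_in_line c"
    by (rule own_queue_supersolution[OF last_in_line_step]) (simp add: p_def)
  then show ?thesis
    unfolding event_sum_rivals[OF i_pos i_le] tagged_rivals R_def[symmetric] c_def[symmetric]
      exit rivals_served
    by (simp add: add.assoc)
qed

lemma sojourn_own_queue_le: "sojourn l lam mu \<theta> \<sigma> i i n \<le> ennreal (last_in_line (rivals l i n))"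
proof -
  interpret tagged: killed_chain "events l" "tagged_rate i" "tagged_target i" "exit_rate l mu \<theta> i i"
    by (rule tagged_killed_chain)
  have "lfp tagged.exit_op n \<le> ennreal (last_in_line (rivals l i n))"
    using last_in_line_nonneg own_queue_supersolution_at less_le_trans[OF \<theta>_pos exit_rate_ge]
    by (intro tagged.lfp_exit_op_le_supersolution) (simp_all add: tagged.total_rate_def)
  then show ?thesis
    unfolding sojourn_eq_lfp .
qed

lemma other_queue_exit_rate_le:
  assumes "q \<noteq> i"
  shows "exit_rate l mu \<theta> i q m \<le> last_in_line_exit_rate \<theta> (mu i) (rivals l i m)"
proof (cases "route l (incr m q i) i = Some q")
  case True
  then have "rivals l i m = 0"
    using rivals_incr[OF i_pos i_le] route_specialized[OF i_pos, of l "incr m q i"] assms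
    by (auto split: if_splits)
  have "1 \<le> real (compat_count l (incr m q i) q i)"
    using compat_count_pos_of_route[OF True] by simp
  then have "mu i / real (compat_count l (incr m q i) q i) \<le> mu i / 1"
    using mu_i_nonneg by (intro divide_left_mono) simp_all
  with True \<open>rivals l i m = 0\<close> show ?thesis
    by (simp add: exit_rate_specialized[OF i_pos i_le] last_in_line_exit_rate_def)
next
  case False
  then show ?thesis
    using mu_i_nonneg by (simp add: exit_rate_specialized[OF i_pos i_le] last_in_line_exit_rate_def)
qed

lemma other_queue_subsolution_at:
  assumes "q \<noteq> i"
  shows "(exit_rate l mu \<theta> i q m + (\<Sum>y\<in>events l. tagged_rate q m y)) * last_in_line (rivals l i m)
     \<le> 1 + (\<Sum>y\<in>events l. tagged_rate q m y * last_in_line (rivals l i (tagged_target q m y)))"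
proof -
  define c where "c = rivals l i m"
  have tagged_rivals: "rivals l i (with_tagged m (Some (q, i))) = c"
    unfolding c_def with_tagged_def using rivals_incr[OF i_pos i_le] assms by simp
  have rivals_served: "\<theta> * real c + (if 0 < c then mu i * real c / real c else 0) = rival_departure_rate \<theta> (mu i) c"
    by (simp add: rival_departure_rate_def)
  have "exit_rate l mu \<theta> i q m * last_in_line c \<le> last_in_line_exit_rate \<theta> (mu i) c * last_in_line c"
    using other_queue_exit_rate_le[OF assms] last_in_line_nonneg unfolding c_def by (rule mult_right_mono)
  with last_in_line_step[of c] show ?thesis
    unfolding event_sum_rivals[OF i_pos i_le] tagged_rivals c_def[symmetric] rivals_served
    by (simp add: algebra_simps)
qed

lemma sojourn_other_queue_ge:
  assumes "q \<noteq> i"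
  shows "ennreal (last_in_line (rivals l i n)) \<le> sojourn l lam mu \<theta> \<sigma> i q n"
proof -
  interpret tagged: killed_chain "events l" "tagged_rate q" "tagged_target q" "exit_rate l mu \<theta> i q"
    by (rule tagged_killed_chain)
  have subsolution: "ennreal (last_in_line (rivals l i m))
      \<le> tagged.exit_op (\<lambda>m. ennreal (last_in_line (rivals l i m))) m" for m
  proof -
    have "0 < exit_rate l mu \<theta> i q m"
      using \<theta>_pos exit_rate_ge by (rule less_le_trans)
    with other_queue_subsolution_at[OF assms, of m] tagged.total_rate_nonneg[of m]
    show ?thesis
      by (simp add: tagged.exit_op_real last_in_line_nonneg tagged.total_rate_def pos_le_divide_eq
          mult.commute ennreal_leI)
  qed
  define A where "A = 1 + (\<Sum>k\<le>l. \<Sum>r\<le>l. lam k * \<sigma> k r) + (\<Sum>j\<le>l. mu j)"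
  have "ennreal (last_in_line (rivals l i n)) \<le> lfp tagged.exit_op n"
  proof (rule tagged.bounded_subsolution_le_lfp[where \<theta> = \<theta> and A = A and W = "1 / \<theta>"
        and pop = "population l" and w = "\<lambda>m. ennreal (last_in_line (rivals l i m))"])
    show "0 < A"
      unfolding A_def using lam_nonneg mu_nonneg \<sigma>_nonneg
      by (intro add_pos_nonneg sum_nonneg mult_nonneg_nonneg) auto
    show "tagged.total_rate m \<le> A + \<theta> * real (population l m)" for m
      unfolding A_def tagged.total_rate_def by (rule total_event_rate_le[OF lam_nonneg mu_nonneg \<sigma>_nonneg])
    show "population l (tagged_target q m y) \<le> Suc (population l m)" if "y \<in> events l" for m y
      using that by (rule population_event_target)
  qed (use \<theta>_pos exit_rate_ge last_in_line_le subsolution in \<open>simp_all add: ennreal_leI\<close>)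
  then show ?thesis
    unfolding sojourn_eq_lfp .
qed

end

theorem lemma2:
  fixes l :: nat and lam mu :: "nat \<Rightarrow> real" and \<theta> :: real
    and \<sigma> :: "nat \<Rightarrow> nat \<Rightarrow> real" and \<pi> :: "state pmf" and i q :: nat
  assumes "\<forall>k\<le>l. 0 < lam k" and "\<forall>j\<le>l. 0 < mu j" and "0 < \<theta>"
    and "profile l \<sigma>"
    and "stationary l lam mu \<theta> \<sigma> \<pi>"
    and "1 \<le> i" and "i \<le> l" and "q \<le> l"
  shows "expected_wait l lam mu \<theta> \<sigma> \<pi> i i \<le> expected_wait l lam mu \<theta> \<sigma> \<pi> i q"
proof -
  have lam: "\<forall>k\<le>l. 0 \<le> lam k" and mu: "\<forall>j\<le>l. 0 \<le> mu j" and \<sigma>: "\<forall>k\<le>l. \<forall>r\<le>l. 0 \<le> \<sigma> k r"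
    using assms(1,2,4) by (auto simp: profile_def less_imp_le)
  have "sojourn l lam mu \<theta> \<sigma> i i n \<le> sojourn l lam mu \<theta> \<sigma> i q n" for n
  proof (cases "q = i")
    case False
    show ?thesis
      using sojourn_own_queue_le[OF lam mu assms(3) \<sigma> assms(6,7)]
        sojourn_other_queue_ge[OF lam mu assms(3) \<sigma> assms(6,7) False]
      by (rule order_trans)
  qed simp
  then show ?thesis
    unfolding expected_wait_def
    by (intro infsum_mono nonneg_summable_on_complete mult_left_mono) auto
qed

end
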